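(* Let $m$ be a given positive integer and let $f:C(\mathbb{R}^{n})\rightarrow\mathbb{R}$ be a distribution of the form $f = \sum_{k = 1}^{m}a_{k}\delta_{(\theta_{k},\rho_{k})}$, with $a_{i}\in\mathbb{R}\setminus\{0\}$, $\rho_{i}\in(0, \infty)$, $\theta_{i}\in\mathbb{S}^{n - 1}$, $1\leq i\leq m$, such that $a_{i}\neq a_{j}$ for $i\neq j$ and the hyperplanes $\langle x,\theta_{1}\rangle = \rho_{1},\dots,\langle x,\theta_{m}\rangle = \rho_{m}$ are all distinct (as subsets of $\mathbb{R}^{n}$). Assume that the spherical mean transform of $f$ is given at $n\cdot m(m - 1) + 2n + 1$ points such that there is no hyperplane in $\mathbb{R}^{n}$ which contains more than $n$ of these given points. Then the parameters $a_{1},\rho_{1},\theta_{1},\dots,a_{m},\rho_{m}, \theta_{m}$ can be uniquely recovered.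
   Context: $C(\mathbb{R}^{n})$ denotes the continuous real functions on $\mathbb{R}^{n}$, $C(\mathbb{R}^{+})$ the continuous real functions on $\mathbb{R}^{+}=[0,\infty)$, and $\mathbb{S}^{n-1}$ the unit sphere in $\mathbb{R}^n$. For $\theta\in\mathbb{S}^{n-1}$ and $\rho>0$, $\delta_{(\theta,\rho)}$ is the distribution $\delta_{(\theta,\rho)}(\phi)=\int_{\langle x,\theta\rangle=\rho}\phi(x)\,dm_{x}$ (integration over the hyperplane with respect to its surface measure). For a function $\phi\in C(\mathbb{R}^n)$ and a point $y\in\mathbb{R}^{n}$, the spherical mean transform (SMT) is $R_{y}\phi(t) = t^{n-1}\int_{|\theta|=1}\phi(y+t\theta)\,d\theta$, $t\geq 0$; its dual is $R_{y}^{\ast}\Lambda(z)=\Lambda(|y-z|)$ for $\Lambda\in C(\mathbb{R}^{+})$. For a distribution $T:C(\mathbb{R}^{n})\to\mathbb{R}$, the SMT of $T$ at $y$ is the map $R_{y}T:C(\mathbb{R}^{+})\to\mathbb{R}$, $(R_{y}T)(\Lambda)=T(\Lambda(|y-\cdot|))$ (whenever defined). "The SMT of $f$ is given at a point $y$" means $R_{y}f$ is known. *)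

theory Defs
  imports "HOL-Analysis.Analysis"
begin

text \<open>The ambient space R^n is a euclidean_space type 'a, with n = DIM('a).
  The hyperplane {x. x \<bullet> \<theta> = \<rho>} (\<theta> a unit vector) is parametrised isometrically
  by R^(n-1) (coordinates u :: nat \<Rightarrow> real on {..<n-1}) through an orthonormal
  frame of the orthogonal complement of \<theta>; its surface measure is the
  image of (n-1)-dimensional Lebesgue measure.\<close>

definition hp_frame :: "'a::euclidean_space \<Rightarrow> nat \<Rightarrow> 'a" where
  "hp_frame \<theta> = (SOME e. (\<forall>i<DIM('a) - 1. \<forall>j<DIM('a) - 1. e i \<bullet> e j = (if i = j then 1 else 0))
                         \<and> (\<forall>i<DIM('a) - 1. e i \<bullet> \<theta> = 0))"

definition hyperplane_delta :: "'a::euclidean_space \<Rightarrow> real \<Rightarrow> ('a \<Rightarrow> real) \<Rightarrow> real" where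
  "hyperplane_delta \<theta> \<rho> \<phi> =
     integral\<^sup>L (PiM {..<DIM('a) - 1} (\<lambda>_. lborel))
       (\<lambda>u. \<phi> (\<rho> *\<^sub>R \<theta> + (\<Sum>i<DIM('a) - 1. u i *\<^sub>R hp_frame \<theta> i)))"

definition delta_sum :: "nat \<Rightarrow> (nat \<Rightarrow> real) \<Rightarrow> (nat \<Rightarrow> 'a::euclidean_space) \<Rightarrow> (nat \<Rightarrow> real)
    \<Rightarrow> ('a \<Rightarrow> real) \<Rightarrow> real" where
  "delta_sum m a \<theta> \<rho> \<phi> = (\<Sum>k<m. a k * hyperplane_delta (\<theta> k) (\<rho> k) \<phi>)"

definition smt_dist :: "'a::euclidean_space \<Rightarrow> (('a \<Rightarrow> real) \<Rightarrow> real) \<Rightarrow> (real \<Rightarrow> real) \<Rightarrow> real" where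
  "smt_dist y T \<Lambda> = T (\<lambda>z. \<Lambda> (norm (y - z)))"

definition test_fn :: "(real \<Rightarrow> real) \<Rightarrow> bool" where
  "test_fn \<Lambda> \<longleftrightarrow> continuous_on {0..} \<Lambda> \<and> (\<exists>R. \<forall>t\<ge>R. \<Lambda> t = 0)"

definition admissible_params :: "nat \<Rightarrow> (nat \<Rightarrow> real) \<Rightarrow> (nat \<Rightarrow> 'a::euclidean_space) \<Rightarrow> (nat \<Rightarrow> real) \<Rightarrow> bool" where
  "admissible_params m a \<theta> \<rho> \<longleftrightarrow>
     (\<forall>k<m. a k \<noteq> 0 \<and> \<rho> k > 0 \<and> norm (\<theta> k) = 1) \<and>
     (\<forall>i<m. \<forall>j<m. i \<noteq> j \<longrightarrow> a i \<noteq> a j) \<and>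
     (\<forall>i<m. \<forall>j<m. i \<noteq> j \<longrightarrow> {x. x \<bullet> \<theta> i = \<rho> i} \<noteq> {x. x \<bullet> \<theta> j = \<rho> j})"

definition no_hyperplane_contains_more :: "nat \<Rightarrow> nat \<Rightarrow> (nat \<Rightarrow> 'a::euclidean_space) \<Rightarrow> bool" where
  "no_hyperplane_contains_more n N y \<longleftrightarrow>
     (\<forall>w c. w \<noteq> 0 \<longrightarrow> card {j. j < N \<and> y j \<bullet> w = c} \<le> n)"

end

theory Submission
  imports Defs
begin

text \<open>Tested against Lambda(|y - .|), the hyperplane delta at (\<theta>, \<rho>) only sees the distance
  |y . \<theta> - \<rho>| from y to the plane, through a profile integral over R^(n-1) that vanishes when
  Lambda vanishes beyond that distance and is positive when Lambda is nonnegative and positive there.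
  Testing with hat functions therefore recovers, at each given point y, the discrete measure with
  masses a_k at the distances from y. At a point where these m distances are pairwise distinct this
  matches the two families by a bijection, which is the same at all such points since the a_k are
  distinct. Two of the distances coincide only on two hyperplanes, so at most n m (m - 1) of the
  points are bad; on the remaining 2n + 1 good points the distance functions of two distinct planes
  cannot agree, since they do so only on a union of two hyperplanes.\<close>

definition orthonormal_frame :: "'a::euclidean_space \<Rightarrow> (nat \<Rightarrow> 'a) \<Rightarrow> bool" where
  "orthonormal_frame \<theta> e \<longleftrightarrow>
     (\<forall>i<DIM('a) - 1. \<forall>j<DIM('a) - 1. e i \<bullet> e j = (if i = j then 1 else 0)) \<and>
     (\<forall>i<DIM('a) - 1. e i \<bullet> \<theta> = 0)"

lemma orthonormal_frame_exists:
  fixes \<theta> :: "'a::euclidean_space"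
  assumes "\<theta> \<noteq> 0"
  shows "\<exists>e. orthonormal_frame \<theta> e"
proof -
  obtain B where B: "B \<subseteq> {x. \<theta> \<bullet> x = 0}" "pairwise orthogonal B"
    "\<And>x. x \<in> B \<Longrightarrow> norm x = 1" "independent B" "card B = dim {x. \<theta> \<bullet> x = 0}"
    using orthonormal_basis_subspace[OF subspace_hyperplane] by metis
  have card_B: "card B = DIM('a) - 1"
    using B(5) dim_hyperplane assms by metis
  obtain e where e: "bij_betw e {0..<card B} B"
    using ex_bij_betw_nat_finite independent_bound B(4) by blast
  have e_in: "e i \<in> B" and e_inj: "e i = e j \<Longrightarrow> i = j"
    if "i < DIM('a) - 1" "j < DIM('a) - 1" for i j
    using e that card_B by (auto simp: bij_betw_def inj_on_def)
  have "orthonormal_frame \<theta> e"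
    unfolding orthonormal_frame_def
  proof (intro conjI allI impI)
    fix i j assume i: "i < DIM('a) - 1" and j: "j < DIM('a) - 1"
    show "e i \<bullet> e j = (if i = j then 1 else 0)"
    proof (cases "i = j")
      case True
      then show ?thesis using B(3) e_in[OF i i] by (simp add: dot_square_norm)
    next
      case False
      then show ?thesis using B(2) e_in[OF i j] e_in[OF j i] e_inj[OF i j]
        by (auto simp: pairwise_def orthogonal_def)
    qed
  next
    fix i assume "i < DIM('a) - 1"
    then show "e i \<bullet> \<theta> = 0" using B(1) e_in[of i i] by (auto simp: inner_commute)
  qed
  then show ?thesis by blast
qed

lemma orthonormal_frame_hp_frame:
  fixes \<theta> :: "'a::euclidean_space"
  assumes "\<theta> \<noteq> 0"
  shows "orthonormal_frame \<theta> (hp_frame \<theta>)"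
  using someI_ex[OF orthonormal_frame_exists[OF assms]]
  unfolding hp_frame_def orthonormal_frame_def by simp

lemma orthonormal_frame_inner_sum:
  fixes \<theta> :: "'a::euclidean_space"
  assumes "orthonormal_frame \<theta> e" "j < DIM('a) - 1"
  shows "(\<Sum>i<DIM('a) - 1. w i *\<^sub>R e i) \<bullet> e j = w j"
proof -
  have "(\<Sum>i<DIM('a) - 1. w i *\<^sub>R e i) \<bullet> e j = (\<Sum>i<DIM('a) - 1. w i * (e i \<bullet> e j))"
    by (simp add: inner_sum_left)
  also have "\<dots> = (\<Sum>i<DIM('a) - 1. if i = j then w j else 0)"
    by (rule sum.cong) (use assms in \<open>auto simp: orthonormal_frame_def\<close>)
  finally show ?thesis using assms(2) by simp
qed

lemma orthonormal_frame_inner_sum_normal: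
  fixes \<theta> :: "'a::euclidean_space"
  assumes "orthonormal_frame \<theta> e"
  shows "(\<Sum>i<DIM('a) - 1. w i *\<^sub>R e i) \<bullet> \<theta> = 0"
  using assms by (simp add: orthonormal_frame_def inner_sum_left)

lemma orthonormal_frame_expansion:
  fixes \<theta> :: "'a::euclidean_space"
  assumes frame: "orthonormal_frame \<theta> e" and unit: "norm \<theta> = 1"
  shows "v = (v \<bullet> \<theta>) *\<^sub>R \<theta> + (\<Sum>i<DIM('a) - 1. (v \<bullet> e i) *\<^sub>R e i)"
proof (rule ccontr)
  let ?k = "DIM('a) - 1"
  define r where "r = v - ((v \<bullet> \<theta>) *\<^sub>R \<theta> + (\<Sum>i<?k. (v \<bullet> e i) *\<^sub>R e i))"
  assume "v \<noteq> (v \<bullet> \<theta>) *\<^sub>R \<theta> + (\<Sum>i<?k. (v \<bullet> e i) *\<^sub>R e i)"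
  then have "r \<noteq> 0" by (simp add: r_def)
  have \<theta>\<theta>: "\<theta> \<bullet> \<theta> = 1" using unit by (simp add: dot_square_norm)
  have e\<theta>: "\<And>i. i < ?k \<Longrightarrow> e i \<bullet> \<theta> = 0"
    and ee: "\<And>i j. i < ?k \<Longrightarrow> j < ?k \<Longrightarrow> e i \<bullet> e j = (if i = j then 1 else 0)"
    using frame by (auto simp: orthonormal_frame_def)
  have r\<theta>: "r \<bullet> \<theta> = 0"
    using orthonormal_frame_inner_sum_normal[OF frame] \<theta>\<theta>
    by (simp add: r_def inner_diff_left inner_add_left)
  have re: "r \<bullet> e j = 0" if "j < ?k" for j
    using orthonormal_frame_inner_sum[OF frame that] e\<theta>[OF that] inner_commute[of \<theta> "e j"]
    by (simp add: r_def inner_diff_left inner_add_left)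
  \<comment> \<open>Otherwise r, \<theta> and the frame would be DIM('a) + 1 orthonormal vectors.\<close>
  define S where "S = insert r (insert \<theta> (e ` {..<?k}))"
  have "inj_on e {..<?k}"
    by (rule inj_onI) (metis ee lessThan_iff zero_neq_one)
  moreover have "\<theta> \<notin> e ` {..<?k}" using e\<theta> \<theta>\<theta> by (auto simp: inner_commute)
  moreover have "r \<notin> insert \<theta> (e ` {..<?k})" using r\<theta> re \<open>r \<noteq> 0\<close> \<theta>\<theta> ee by fastforce
  ultimately have "card S = ?k + 2" by (simp add: S_def card_image)
  moreover have "independent S"
  proof (rule pairwise_orthogonal_independent)
    show "pairwise orthogonal S"
      unfolding S_def pairwise_def orthogonal_def
      using r\<theta> re e\<theta> ee by (auto simp: inner_commute)
    show "0 \<notin> S" unfolding S_def using \<open>r \<noteq> 0\<close> unit ee by force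
  qed
  ultimately show False using independent_bound by fastforce
qed

lemma norm_orthonormal_frame_combination:
  fixes \<theta> :: "'a::euclidean_space"
  assumes frame: "orthonormal_frame \<theta> e" and unit: "norm \<theta> = 1"
  shows "(norm (s *\<^sub>R \<theta> + (\<Sum>i<DIM('a) - 1. w i *\<^sub>R e i)))\<^sup>2 = s\<^sup>2 + (\<Sum>i<DIM('a) - 1. (w i)\<^sup>2)"
proof -
  let ?S = "\<Sum>i<DIM('a) - 1. w i *\<^sub>R e i"
  have "?S \<bullet> ?S = (\<Sum>j<DIM('a) - 1. w j * (?S \<bullet> e j))"
    by (simp add: inner_sum_right)
  also have "\<dots> = (\<Sum>j<DIM('a) - 1. (w j)\<^sup>2)"
    by (rule sum.cong) (use orthonormal_frame_inner_sum[OF frame] in \<open>auto simp: power2_eq_square\<close>)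
  finally have "?S \<bullet> ?S = (\<Sum>j<DIM('a) - 1. (w j)\<^sup>2)" .
  moreover have "\<theta> \<bullet> \<theta> = 1" using unit by (simp add: dot_square_norm)
  ultimately show ?thesis
    using orthonormal_frame_inner_sum_normal[OF frame]
    unfolding power2_norm_eq_inner
    by (simp add: inner_add_left inner_add_right inner_commute power2_eq_square)
qed

abbreviation lborel_coords :: "nat \<Rightarrow> (nat \<Rightarrow> real) measure" where
  "lborel_coords k \<equiv> PiM {..<k} (\<lambda>_. lborel)"

interpretation lborel_product: product_sigma_finite "\<lambda>_::nat. lborel :: real measure"
  by standard

lemma distr_lborel_coords_translate:
  "distr (lborel_coords k) (lborel_coords k) (\<lambda>u. \<lambda>i\<in>{..<k}. c i + u i) = lborel_coords k"
proof (rule lborel_product.PiM_eqI)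
  fix A assume A: "\<And>i. i \<in> {..<k} \<Longrightarrow> A i \<in> sets (lborel :: real measure)"
  let ?T = "\<lambda>u. \<lambda>i\<in>{..<k}. c i + u i"
  have T: "?T \<in> measurable (lborel_coords k) (lborel_coords k)"
    by measurable
  have A_shift: "(+) (c i) -` A i \<in> sets borel" if "i \<in> {..<k}" for i
    by (rule measurable_sets_borel[of _ borel]) (use A[OF that] in simp_all)
  have emeasure_shift: "emeasure lborel ((+) (c i) -` A i) = emeasure lborel (A i)"
    if "i \<in> {..<k}" for i
  proof -
    have "emeasure lborel (A i) = emeasure (distr lborel borel ((+) (c i))) (A i)"
      by (simp add: lborel_distr_plus)
    also have "\<dots> = emeasure lborel ((+) (c i) -` A i)"
      using A[OF that] by (subst emeasure_distr) auto
    finally show ?thesis ..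
  qed
  have "?T -` Pi\<^sub>E {..<k} A \<inter> space (lborel_coords k) = Pi\<^sub>E {..<k} (\<lambda>i. (+) (c i) -` A i)"
    by (auto simp: space_PiM PiE_iff)
  then have "emeasure (distr (lborel_coords k) (lborel_coords k) ?T) (Pi\<^sub>E {..<k} A)
      = emeasure (lborel_coords k) (Pi\<^sub>E {..<k} (\<lambda>i. (+) (c i) -` A i))"
    using A by (subst emeasure_distr[OF T]) (auto intro: sets_PiM_I_finite)
  also have "\<dots> = (\<Prod>i<k. emeasure lborel ((+) (c i) -` A i))"
    by (rule lborel_product.emeasure_PiM) (use A_shift in auto)
  also have "\<dots> = (\<Prod>i<k. emeasure lborel (A i))"
    by (rule prod.cong) (use emeasure_shift in auto)
  finally show "emeasure (distr (lborel_coords k) (lborel_coords k) ?T) (Pi\<^sub>E {..<k} A)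
      = (\<Prod>i<k. emeasure lborel (A i))" .
qed simp_all

lemma integral_lborel_coords_sum_squares_translate:
  fixes h :: "real \<Rightarrow> real"
  assumes "h \<in> borel_measurable borel"
  shows "integral\<^sup>L (lborel_coords k) (\<lambda>u. h (\<Sum>i<k. (u i - c i)\<^sup>2))
       = integral\<^sup>L (lborel_coords k) (\<lambda>u. h (\<Sum>i<k. (u i)\<^sup>2))"
proof -
  let ?T = "\<lambda>u. \<lambda>i\<in>{..<k}. - c i + u i"
  have "integral\<^sup>L (lborel_coords k) (\<lambda>u. h (\<Sum>i<k. (u i)\<^sup>2))
      = integral\<^sup>L (distr (lborel_coords k) (lborel_coords k) ?T) (\<lambda>u. h (\<Sum>i<k. (u i)\<^sup>2))"
    by (simp only: distr_lborel_coords_translate)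
  also have "\<dots> = integral\<^sup>L (lborel_coords k) (\<lambda>u. h (\<Sum>i<k. (?T u i)\<^sup>2))"
    by (rule integral_distr) (use assms in measurable)
  finally show ?thesis by simp
qed

lemma emeasure_lborel_coords_cube:
  assumes "r \<ge> 0"
  shows "emeasure (lborel_coords k) (Pi\<^sub>E {..<k} (\<lambda>_. {-r..r})) = ennreal ((2 * r) ^ k)"
proof -
  have "emeasure (lborel_coords k) (Pi\<^sub>E {..<k} (\<lambda>_. {-r..r})) = (\<Prod>i<k. emeasure lborel {-r..r})"
    by (rule lborel_product.emeasure_PiM) auto
  also have "\<dots> = ennreal ((2 * r) ^ k)"
    using assms by (simp add: ennreal_power)
  finally show ?thesis .
qed

text \<open>In orthonormal coordinates on a hyperplane, centred at the foot of the perpendicular from y,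
  Lambda(|y - z|) becomes the integrand below with s the signed distance from y to the plane.\<close>
definition radial_integral :: "nat \<Rightarrow> real \<Rightarrow> (real \<Rightarrow> real) \<Rightarrow> real" where
  "radial_integral k s \<Lambda> = integral\<^sup>L (lborel_coords k) (\<lambda>v. \<Lambda> (sqrt (s\<^sup>2 + (\<Sum>i<k. (v i)\<^sup>2))))"

lemma hyperplane_delta_radial_integral:
  fixes \<theta> y :: "'a::euclidean_space"
  assumes unit: "norm \<theta> = 1" and meas: "\<Lambda> \<in> borel_measurable borel"
  shows "hyperplane_delta \<theta> \<rho> (\<lambda>z. \<Lambda> (norm (y - z))) = radial_integral (DIM('a) - 1) \<bar>y \<bullet> \<theta> - \<rho>\<bar> \<Lambda>"
proof -
  let ?k = "DIM('a) - 1"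
  let ?e = "hp_frame \<theta>"
  define s where "s = y \<bullet> \<theta> - \<rho>"
  define c where "c i = y \<bullet> ?e i" for i
  have frame: "orthonormal_frame \<theta> ?e"
    using unit by (intro orthonormal_frame_hp_frame) auto
  have e\<theta>: "\<theta> \<bullet> ?e i = 0" if "i < ?k" for i
    using frame that by (simp add: orthonormal_frame_def inner_commute)
  have "y - \<rho> *\<^sub>R \<theta> = ((y - \<rho> *\<^sub>R \<theta>) \<bullet> \<theta>) *\<^sub>R \<theta> + (\<Sum>i<?k. ((y - \<rho> *\<^sub>R \<theta>) \<bullet> ?e i) *\<^sub>R ?e i)"
    by (rule orthonormal_frame_expansion[OF frame unit])
  also have "\<dots> = s *\<^sub>R \<theta> + (\<Sum>i<?k. c i *\<^sub>R ?e i)"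
    using unit e\<theta> by (simp add: s_def c_def inner_diff_left dot_square_norm)
  finally have foot: "y - \<rho> *\<^sub>R \<theta> = s *\<^sub>R \<theta> + (\<Sum>i<?k. c i *\<^sub>R ?e i)" .
  have integrand: "\<Lambda> (norm (y - (\<rho> *\<^sub>R \<theta> + (\<Sum>i<?k. u i *\<^sub>R ?e i))))
      = \<Lambda> (sqrt (s\<^sup>2 + (\<Sum>i<?k. (u i - c i)\<^sup>2)))" for u
  proof -
    have "y - (\<rho> *\<^sub>R \<theta> + (\<Sum>i<?k. u i *\<^sub>R ?e i)) = s *\<^sub>R \<theta> + (\<Sum>i<?k. (c i - u i) *\<^sub>R ?e i)"
      using foot by (simp add: algebra_simps sum_subtractf scaleR_diff_left)
    then have "(norm (y - (\<rho> *\<^sub>R \<theta> + (\<Sum>i<?k. u i *\<^sub>R ?e i))))\<^sup>2 = s\<^sup>2 + (\<Sum>i<?k. (u i - c i)\<^sup>2)"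
      using norm_orthonormal_frame_combination[OF frame unit] by (simp add: power2_commute)
    then show ?thesis by (metis norm_ge_zero real_sqrt_unique)
  qed
  have "(\<lambda>x. \<Lambda> (sqrt (s\<^sup>2 + x))) \<in> borel_measurable borel"
    using meas by measurable
  then show ?thesis
    unfolding hyperplane_delta_def integrand s_def[symmetric] radial_integral_def power2_abs
    by (rule integral_lborel_coords_sum_squares_translate)
qed

lemma abs_le_sqrt_sum_squares:
  fixes v :: "nat \<Rightarrow> real"
  shows "\<bar>s\<bar> \<le> sqrt (s\<^sup>2 + (\<Sum>i<k. (v i)\<^sup>2))"
    and "j < k \<Longrightarrow> \<bar>v j\<bar> \<le> sqrt (s\<^sup>2 + (\<Sum>i<k. (v i)\<^sup>2))"
proof -
  show "\<bar>s\<bar> \<le> sqrt (s\<^sup>2 + (\<Sum>i<k. (v i)\<^sup>2))"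
    using real_sqrt_le_mono[of "s\<^sup>2" "s\<^sup>2 + (\<Sum>i<k. (v i)\<^sup>2)"] by (simp add: sum_nonneg)
  assume "j < k"
  then have "(v j)\<^sup>2 \<le> s\<^sup>2 + (\<Sum>i<k. (v i)\<^sup>2)"
    using member_le_sum[of j "{..<k}" "\<lambda>i. (v i)\<^sup>2"] by (simp add: add_increasing)
  then show "\<bar>v j\<bar> \<le> sqrt (s\<^sup>2 + (\<Sum>i<k. (v i)\<^sup>2))"
    using real_sqrt_le_mono by fastforce
qed

lemma radial_integral_eq_0:
  assumes "\<forall>t\<ge>\<bar>s\<bar>. \<Lambda> t = 0"
  shows "radial_integral k s \<Lambda> = 0"
  using assms abs_le_sqrt_sum_squares(1) by (simp add: radial_integral_def)

lemma integrable_radial_integrand: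
  fixes \<Lambda> :: "real \<Rightarrow> real"
  assumes cont: "continuous_on UNIV \<Lambda>" and supp: "\<forall>t\<ge>R. \<Lambda> t = 0"
  shows "integrable (lborel_coords k) (\<lambda>v. \<Lambda> (sqrt (s\<^sup>2 + (\<Sum>i<k. (v i)\<^sup>2))))"
proof -
  let ?g = "\<lambda>v. \<Lambda> (sqrt (s\<^sup>2 + (\<Sum>i<k. (v i)\<^sup>2)))"
  define r where "r = max R 0"
  define cube where "cube = Pi\<^sub>E {..<k} (\<lambda>_. {-r..r})"
  obtain B where B: "\<And>t. t \<in> {0..r} \<Longrightarrow> \<bar>\<Lambda> t\<bar> \<le> B"
    using compact_imp_bounded[OF compact_continuous_image[OF continuous_on_subset[OF cont] compact_Icc]]
    unfolding bounded_iff by fastforce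
  have "0 \<le> B" using B[of 0] by (simp add: r_def)
  have bound: "norm (?g v) \<le> norm (B * indicator cube v)" if "v \<in> space (lborel_coords k)" for v
  proof (cases "?g v = 0")
    case False
    let ?t = "sqrt (s\<^sup>2 + (\<Sum>i<k. (v i)\<^sup>2))"
    have "\<not> R \<le> ?t" using False supp by blast
    then have "?t \<le> r" by (simp add: r_def)
    moreover have "0 \<le> ?t" by (simp add: sum_nonneg)
    moreover have "v \<in> cube"
      using that \<open>?t \<le> r\<close> abs_le_sqrt_sum_squares(2)[of _ k v s]
      by (fastforce simp: cube_def space_PiM PiE_iff abs_le_iff)
    ultimately show ?thesis using B \<open>0 \<le> B\<close> by simp
  qed simp
  have "emeasure (lborel_coords k) cube < \<infinity>"
    using emeasure_lborel_coords_cube[of r k] by (simp add: cube_def r_def)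
  moreover have "cube \<in> sets (lborel_coords k)"
    unfolding cube_def by (rule sets_PiM_I_finite) auto
  ultimately have "integrable (lborel_coords k) (\<lambda>v. B * indicator cube v)"
    by (intro integrable_mult_right integrable_real_indicator)
  moreover have "?g \<in> borel_measurable (lborel_coords k)"
    using borel_measurable_continuous_onI[OF cont] by measurable
  ultimately show ?thesis
    by (rule Bochner_Integration.integrable_bound) (intro AE_I2 bound)
qed

lemma radial_integral_pos:
  fixes \<Lambda> :: "real \<Rightarrow> real"
  assumes cont: "continuous_on UNIV \<Lambda>" and nonneg: "\<And>t. \<Lambda> t \<ge> 0"
    and pos: "\<Lambda> \<bar>s\<bar> > 0" and supp: "\<forall>t\<ge>R. \<Lambda> t = 0"
  shows "radial_integral k s \<Lambda> > 0"
proof -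
  define h where "h x = \<Lambda> (sqrt (s\<^sup>2 + x))" for x
  have "continuous_on UNIV h"
    unfolding h_def by (intro continuous_on_compose2[OF cont] continuous_intros) auto
  then have "isCont h 0" by (simp add: continuous_on_eq_continuous_at)
  moreover have "h 0 > 0" using pos by (simp add: h_def)
  ultimately obtain \<delta> where "\<delta> > 0" and \<delta>: "\<And>x. dist x 0 < \<delta> \<Longrightarrow> dist (h x) (h 0) < h 0 / 2"
    unfolding continuous_at_eps_delta using half_gt_zero by blast
  define \<epsilon> where "\<epsilon> = sqrt (\<delta> / (k + 1))"
  have "\<epsilon> > 0" and \<epsilon>2: "\<epsilon>\<^sup>2 = \<delta> / (k + 1)" using \<open>\<delta> > 0\<close> by (simp_all add: \<epsilon>_def)
  define cube where "cube = Pi\<^sub>E {..<k} (\<lambda>_. {-\<epsilon>..\<epsilon>})"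
  have below: "h 0 / 2 * indicator cube v \<le> h (\<Sum>i<k. (v i)\<^sup>2)" for v
  proof (cases "v \<in> cube")
    case True
    have "(\<Sum>i<k. (v i)\<^sup>2) \<le> (\<Sum>i<k. \<epsilon>\<^sup>2)"
    proof (rule sum_mono)
      fix i assume "i \<in> {..<k}"
      then have "\<bar>v i\<bar> \<le> \<epsilon>" using True by (force simp: cube_def PiE_iff abs_le_iff)
      then show "(v i)\<^sup>2 \<le> \<epsilon>\<^sup>2" by (metis abs_le_square_iff abs_of_pos \<open>\<epsilon> > 0\<close>)
    qed
    also have "\<dots> = k * (\<delta> / (k + 1))" using \<epsilon>2 by simp
    also have "\<dots> < \<delta>" using \<open>\<delta> > 0\<close> by (simp add: field_simps)
    finally have "dist (h (\<Sum>i<k. (v i)\<^sup>2)) (h 0) < h 0 / 2"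
      by (intro \<delta>) (simp add: sum_nonneg)
    then have "h 0 / 2 \<le> h (\<Sum>i<k. (v i)\<^sup>2)"
      unfolding dist_real_def abs_less_iff by linarith
    then show ?thesis using True by simp
  qed (simp add: h_def nonneg)
  have "cube \<in> sets (lborel_coords k)"
    unfolding cube_def by (rule sets_PiM_I_finite) auto
  moreover have "measure (lborel_coords k) cube > 0"
    using emeasure_lborel_coords_cube[of \<epsilon> k] \<open>\<epsilon> > 0\<close> by (simp add: cube_def measure_def)
  ultimately have "0 < integral\<^sup>L (lborel_coords k) (\<lambda>v. h 0 / 2 * indicator cube v)"
    using \<open>h 0 > 0\<close> by simp
  also have "\<dots> \<le> integral\<^sup>L (lborel_coords k) (\<lambda>v. h (\<Sum>i<k. (v i)\<^sup>2))"
    using integrable_radial_integrand[OF cont supp] below nonneg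
    by (intro integral_mono') (auto simp: h_def)
  finally show ?thesis by (simp add: radial_integral_def h_def)
qed

definition mass_at :: "nat \<Rightarrow> (nat \<Rightarrow> 'b) \<Rightarrow> (nat \<Rightarrow> 'c::comm_monoid_add) \<Rightarrow> 'b \<Rightarrow> 'c" where
  "mass_at m d a t = (\<Sum>i<m. if d i = t then a i else 0)"

lemma mass_at_eq_0: "t \<notin> d ` {..<m} \<Longrightarrow> mass_at m d a t = 0"
  unfolding mass_at_def by (intro sum.neutral) auto

lemma mass_at_inj_on:
  assumes "inj_on d {..<m}" "i < m"
  shows "mass_at m d a (d i) = a i"
proof -
  have "mass_at m d a (d i) = (\<Sum>l<m. if l = i then a l else 0)"
    unfolding mass_at_def by (rule sum.cong) (use assms in \<open>auto simp: inj_on_def\<close>)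
  then show ?thesis using assms(2) by simp
qed

lemma sum_eq_sum_mass_at:
  fixes a :: "nat \<Rightarrow> 'c::semiring_0"
  assumes "finite D" "d ` {..<m} \<subseteq> D"
  shows "(\<Sum>i<m. a i * P (d i)) = (\<Sum>t\<in>D. mass_at m d a t * P t)"
proof -
  have "(\<Sum>t\<in>D. mass_at m d a t * P t) = (\<Sum>t\<in>D. \<Sum>i<m. if d i = t then a i * P t else 0)"
    unfolding mass_at_def sum_distrib_right by (intro sum.cong) auto
  also have "\<dots> = (\<Sum>i<m. \<Sum>t\<in>D. if d i = t then a i * P t else 0)"
    by (rule sum.swap)
  also have "\<dots> = (\<Sum>i<m. a i * P (d i))"
    using assms by (intro sum.cong) (auto simp: sum.delta)
  finally show ?thesis ..
qed

text \<open>Test with a hat function supported just beyond the smallest point with a nonzero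
  coefficient.\<close>
lemma coefficients_eq_0_if_test_sums_eq_0:
  fixes P :: "real \<Rightarrow> (real \<Rightarrow> real) \<Rightarrow> real" and c :: "real \<Rightarrow> real"
  assumes D: "finite D" "D \<subseteq> {0..}"
    and sums_0: "\<And>\<Lambda>. continuous_on UNIV \<Lambda> \<Longrightarrow> (\<And>t. \<Lambda> t \<ge> 0) \<Longrightarrow> \<exists>R. \<forall>t\<ge>R. \<Lambda> t = 0 \<Longrightarrow>
        (\<Sum>t\<in>D. c t * P t \<Lambda>) = 0"
    and vanish: "\<And>s \<Lambda>. s \<ge> 0 \<Longrightarrow> \<forall>t\<ge>s. \<Lambda> t = 0 \<Longrightarrow> P s \<Lambda> = 0"
    and pos: "\<And>s \<Lambda> R. s \<ge> 0 \<Longrightarrow> continuous_on UNIV \<Lambda> \<Longrightarrow> (\<And>t. \<Lambda> t \<ge> 0) \<Longrightarrow> \<Lambda> s > 0 \<Longrightarrow>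
        \<forall>t\<ge>R. \<Lambda> t = 0 \<Longrightarrow> P s \<Lambda> > 0"
    and "t \<in> D"
  shows "c t = 0"
proof (rule ccontr)
  assume "c t \<noteq> 0"
  define e where "e = Min {t\<in>D. c t \<noteq> 0}"
  have "e \<in> D" "c e \<noteq> 0"
    using Min_in[of "{t\<in>D. c t \<noteq> 0}"] D(1) \<open>t \<in> D\<close> \<open>c t \<noteq> 0\<close> by (auto simp: e_def)
  have below_e: "c s = 0" if "s \<in> D" "s < e" for s
  proof (rule ccontr)
    assume "c s \<noteq> 0"
    then have "e \<le> s" unfolding e_def using that(1) D(1) by (intro Min_le) auto
    then show False using that(2) by simp
  qed
  define e' where "e' = Min (insert (e + 1) {t\<in>D. t > e})"
  have "e < e'" and above_e: "\<And>t. t \<in> D \<Longrightarrow> t > e \<Longrightarrow> e' \<le> t"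
    using D(1) by (auto simp: e'_def)
  define \<Lambda> where "\<Lambda> t = max 0 (e' - t)" for t
  have cont: "continuous_on UNIV \<Lambda>" unfolding \<Lambda>_def by (intro continuous_intros)
  have nonneg: "\<And>t. \<Lambda> t \<ge> 0" and supp: "\<forall>t\<ge>e'. \<Lambda> t = 0" by (auto simp: \<Lambda>_def)
  have "(\<Sum>t\<in>D. c t * P t \<Lambda>) = c e * P e \<Lambda> + (\<Sum>t\<in>D - {e}. c t * P t \<Lambda>)"
    using D(1) \<open>e \<in> D\<close> by (simp add: sum.remove)
  also have "(\<Sum>t\<in>D - {e}. c t * P t \<Lambda>) = 0"
  proof (intro sum.neutral ballI)
    fix t assume t: "t \<in> D - {e}"
    show "c t * P t \<Lambda> = 0"
    proof (cases "t < e")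
      case False
      then have "e' \<le> t" using above_e t by auto
      then have "\<forall>s\<ge>t. \<Lambda> s = 0" using supp by auto
      then show ?thesis using vanish[of t \<Lambda>] t D(2) by auto
    qed (use below_e t in simp)
  qed
  finally have "c e * P e \<Lambda> = 0"
    using sums_0[OF cont nonneg] supp by simp blast
  moreover have "\<Lambda> e > 0" using \<open>e < e'\<close> by (simp add: \<Lambda>_def)
  then have "P e \<Lambda> > 0"
    using pos[OF _ cont nonneg _ supp] \<open>e \<in> D\<close> D(2) by auto
  ultimately show False using \<open>c e \<noteq> 0\<close> by simp
qed

lemma reindex_if_mass_at_eq:
  fixes a a' :: "nat \<Rightarrow> 'c::comm_monoid_add"
  assumes d: "inj_on d {..<m}" and a: "\<And>i. i < m \<Longrightarrow> a i \<noteq> 0"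
    and mass: "\<And>t. mass_at m d a t = mass_at m d' a' t"
  shows "\<exists>\<sigma>. bij_betw \<sigma> {..<m} {..<m} \<and> (\<forall>j<m. d' j = d (\<sigma> j) \<and> a' j = a (\<sigma> j))"
proof -
  have "d i \<in> d' ` {..<m}" if "i < m" for i
  proof (rule ccontr)
    assume "d i \<notin> d' ` {..<m}"
    then have "mass_at m d' a' (d i) = 0" by (rule mass_at_eq_0)
    then show False using mass[of "d i"] mass_at_inj_on[where a = a, OF d that] a[OF that] by simp
  qed
  then have "d ` {..<m} \<subseteq> d' ` {..<m}" by auto
  moreover have "card (d' ` {..<m}) \<le> card (d ` {..<m})"
    using card_image_le[of "{..<m}" d'] d by (simp add: card_image)
  ultimately have image_eq: "d' ` {..<m} = d ` {..<m}"
    by (intro card_seteq[symmetric]) auto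
  then have d': "bij_betw d' {..<m} (d ` {..<m})"
    using d by (simp add: bij_betw_def eq_card_imp_inj_on card_image)
  define \<sigma> where "\<sigma> = inv_into {..<m} d \<circ> d'"
  have \<sigma>: "bij_betw \<sigma> {..<m} {..<m}"
    unfolding \<sigma>_def by (rule bij_betw_trans[OF d' bij_betw_inv_into[OF inj_on_imp_bij_betw[OF d]]])
  have d_\<sigma>: "d (\<sigma> j) = d' j" if "j < m" for j
    unfolding \<sigma>_def comp_def by (rule f_inv_into_f) (use image_eq that in blast)
  have a_\<sigma>: "a' j = a (\<sigma> j)" if "j < m" for j
  proof -
    have "a' j = mass_at m d' a' (d' j)"
      using that d' by (simp add: mass_at_inj_on bij_betw_def)
    also have "\<dots> = mass_at m d a (d (\<sigma> j))" using mass d_\<sigma>[OF that] by simp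
    also have "\<dots> = a (\<sigma> j)"
      using bij_betw_apply[OF \<sigma>] that by (intro mass_at_inj_on[OF d]) blast
    finally show ?thesis .
  qed
  show ?thesis using \<sigma> d_\<sigma> a_\<sigma> by (intro exI[of _ \<sigma>]) simp
qed

lemma smt_delta_sum:
  fixes \<theta> :: "nat \<Rightarrow> 'a::euclidean_space"
  assumes "\<forall>k<m. norm (\<theta> k) = 1" and "\<Lambda> \<in> borel_measurable borel"
  shows "smt_dist y (delta_sum m a \<theta> \<rho>) \<Lambda>
       = (\<Sum>k<m. a k * radial_integral (DIM('a) - 1) \<bar>y \<bullet> \<theta> k - \<rho> k\<bar> \<Lambda>)"
proof -
  have "hyperplane_delta (\<theta> k) (\<rho> k) (\<lambda>z. \<Lambda> (norm (y - z)))
      = radial_integral (DIM('a) - 1) \<bar>y \<bullet> \<theta> k - \<rho> k\<bar> \<Lambda>" if "k < m" for k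
    using hyperplane_delta_radial_integral[OF _ assms(2)] assms(1) that by blast
  then show ?thesis
    unfolding smt_dist_def delta_sum_def by (intro sum.cong) simp_all
qed

lemma smt_delta_sum_determines_distances:
  fixes \<theta> \<theta>' :: "nat \<Rightarrow> 'a::euclidean_space" and y :: 'a
  assumes units: "\<forall>k<m. norm (\<theta> k) = 1" "\<forall>k<m. norm (\<theta>' k) = 1"
    and inj: "inj_on (\<lambda>k. \<bar>y \<bullet> \<theta> k - \<rho> k\<bar>) {..<m}" and a: "\<And>k. k < m \<Longrightarrow> a k \<noteq> 0"
    and smt_eq: "\<forall>\<Lambda>. test_fn \<Lambda> \<longrightarrow>
        smt_dist y (delta_sum m a \<theta> \<rho>) \<Lambda> = smt_dist y (delta_sum m a' \<theta>' \<rho>') \<Lambda>"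
  shows "\<exists>\<sigma>. bij_betw \<sigma> {..<m} {..<m} \<and>
           (\<forall>k<m. \<bar>y \<bullet> \<theta>' k - \<rho>' k\<bar> = \<bar>y \<bullet> \<theta> (\<sigma> k) - \<rho> (\<sigma> k)\<bar> \<and> a' k = a (\<sigma> k))"
proof -
  define d where "d = (\<lambda>k. \<bar>y \<bullet> \<theta> k - \<rho> k\<bar>)"
  define d' where "d' = (\<lambda>k. \<bar>y \<bullet> \<theta>' k - \<rho>' k\<bar>)"
  define D where "D = d ` {..<m} \<union> d' ` {..<m}"
  have "mass_at m d a t - mass_at m d' a' t = 0" if "t \<in> D" for t
  proof (rule coefficients_eq_0_if_test_sums_eq_0[where c = "\<lambda>t. mass_at m d a t - mass_at m d' a' t",
        OF _ _ _ radial_integral_eq_0 radial_integral_pos])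
    show "finite D" "D \<subseteq> {0..}" by (auto simp: D_def d_def d'_def)
    fix \<Lambda> :: "real \<Rightarrow> real"
    assume cont: "continuous_on UNIV \<Lambda>" and "\<exists>R. \<forall>t\<ge>R. \<Lambda> t = 0"
    then have "test_fn \<Lambda>" by (auto simp: test_fn_def intro: continuous_on_subset)
    then have "smt_dist y (delta_sum m a \<theta> \<rho>) \<Lambda> = smt_dist y (delta_sum m a' \<theta>' \<rho>') \<Lambda>"
      using smt_eq by blast
    then have "(\<Sum>k<m. a k * radial_integral (DIM('a) - 1) (d k) \<Lambda>)
        = (\<Sum>k<m. a' k * radial_integral (DIM('a) - 1) (d' k) \<Lambda>)"
      unfolding d_def d'_def borel_measurable_continuous_onI[OF cont, THEN smt_delta_sum[OF units(1)]]
        borel_measurable_continuous_onI[OF cont, THEN smt_delta_sum[OF units(2)]] .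
    moreover have "(\<Sum>k<m. a k * radial_integral (DIM('a) - 1) (d k) \<Lambda>)
        = (\<Sum>t\<in>D. mass_at m d a t * radial_integral (DIM('a) - 1) t \<Lambda>)"
      and "(\<Sum>k<m. a' k * radial_integral (DIM('a) - 1) (d' k) \<Lambda>)
        = (\<Sum>t\<in>D. mass_at m d' a' t * radial_integral (DIM('a) - 1) t \<Lambda>)"
      by (rule sum_eq_sum_mass_at; force simp: D_def)+
    ultimately show "(\<Sum>t\<in>D. (mass_at m d a t - mass_at m d' a' t) * radial_integral (DIM('a) - 1) t \<Lambda>) = 0"
      by (simp add: left_diff_distrib sum_subtractf)
  qed (use that in auto)
  moreover have "mass_at m d a t = 0" "mass_at m d' a' t = 0" if "t \<notin> D" for t
    using that by (simp_all add: mass_at_eq_0 D_def)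
  ultimately have "mass_at m d a t = mass_at m d' a' t" for t
    by (metis eq_iff_diff_eq_0)
  then show ?thesis
    using reindex_if_mass_at_eq[of d m a d' a'] inj a unfolding d_def d'_def by blast
qed

lemma smt_delta_sum_distances_eq_along_weights:
  fixes \<theta> \<theta>' :: "nat \<Rightarrow> 'a::euclidean_space" and y :: 'a
  assumes "\<forall>k<m. norm (\<theta> k) = 1" "\<forall>k<m. norm (\<theta>' k) = 1"
    and "inj_on (\<lambda>k. \<bar>y \<bullet> \<theta> k - \<rho> k\<bar>) {..<m}"
    and "\<forall>\<Lambda>. test_fn \<Lambda> \<longrightarrow>
        smt_dist y (delta_sum m a \<theta> \<rho>) \<Lambda> = smt_dist y (delta_sum m a' \<theta>' \<rho>') \<Lambda>"
    and a: "\<And>k. k < m \<Longrightarrow> a k \<noteq> 0" "inj_on a {..<m}"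
    and \<sigma>: "bij_betw \<sigma> {..<m} {..<m}" "\<forall>k<m. a' k = a (\<sigma> k)"
  shows "\<forall>k<m. \<bar>y \<bullet> \<theta>' k - \<rho>' k\<bar> = \<bar>y \<bullet> \<theta> (\<sigma> k) - \<rho> (\<sigma> k)\<bar>"
proof -
  obtain \<tau> where \<tau>: "bij_betw \<tau> {..<m} {..<m}"
    "\<forall>k<m. \<bar>y \<bullet> \<theta>' k - \<rho>' k\<bar> = \<bar>y \<bullet> \<theta> (\<tau> k) - \<rho> (\<tau> k)\<bar> \<and> a' k = a (\<tau> k)"
    using smt_delta_sum_determines_distances[OF assms(1-3) a(1) assms(4)] by blast
  have "\<tau> k = \<sigma> k" if "k < m" for k
    using inj_onD[OF a(2), of "\<tau> k" "\<sigma> k"] \<tau> \<sigma> that bij_betwE by fastforce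
  then show ?thesis using \<tau>(2) by simp
qed

lemma card_points_on_hyperplane_le:
  assumes "no_hyperplane_contains_more n N y" and "w \<noteq> 0 \<or> c \<noteq> 0"
  shows "card {j. j < N \<and> y j \<bullet> w = c} \<le> n"
proof (cases "w = 0")
  case True
  then show ?thesis using assms(2) by simp
qed (use assms(1) in \<open>simp add: no_hyperplane_contains_more_def\<close>)

lemma abs_inner_diff_eq_iff:
  fixes y \<theta> \<theta>' :: "'a::real_inner"
  shows "\<bar>y \<bullet> \<theta> - \<rho>\<bar> = \<bar>y \<bullet> \<theta>' - \<rho>'\<bar> \<longleftrightarrow>
           y \<bullet> (\<theta> - \<theta>') = \<rho> - \<rho>' \<or> y \<bullet> (\<theta> + \<theta>') = \<rho> + \<rho>'"
  by (auto simp: abs_eq_iff inner_diff_right inner_add_right)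

lemma hyperplane_eq_if_distances_agree:
  assumes no_hp: "no_hyperplane_contains_more n N y" and "\<rho> > 0" "\<rho>' > 0"
    and "G \<subseteq> {..<N}" "card G > 2 * n"
    and agree: "\<And>j. j \<in> G \<Longrightarrow> \<bar>y j \<bullet> \<theta> - \<rho>\<bar> = \<bar>y j \<bullet> \<theta>' - \<rho>'\<bar>"
  shows "\<theta> = \<theta>' \<and> \<rho> = \<rho>'"
proof (rule ccontr)
  define A where "A = {j. j < N \<and> y j \<bullet> (\<theta> - \<theta>') = \<rho> - \<rho>'}"
  define B where "B = {j. j < N \<and> y j \<bullet> (\<theta> + \<theta>') = \<rho> + \<rho>'}"
  assume "\<not> (\<theta> = \<theta>' \<and> \<rho> = \<rho>')"
  then have card_A: "card A \<le> n"
    unfolding A_def by (intro card_points_on_hyperplane_le[OF no_hp]) auto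
  have card_B: "card B \<le> n"
    unfolding B_def using \<open>\<rho> > 0\<close> \<open>\<rho>' > 0\<close> by (intro card_points_on_hyperplane_le[OF no_hp]) auto
  have "G \<subseteq> A \<union> B"
    using agree \<open>G \<subseteq> {..<N}\<close> by (auto simp: A_def B_def abs_inner_diff_eq_iff)
  then have "card G \<le> card (A \<union> B)" by (intro card_mono) (simp_all add: A_def B_def)
  also have "\<dots> \<le> card A + card B" by (rule card_Un_le)
  finally show False using card_A card_B \<open>card G > 2 * n\<close> by linarith
qed

text \<open>Distances to two of the hyperplanes collide on two hyperplanes; charging the difference
  hyperplane to the pair (i, l) with i < l and the sum hyperplane to the pair with i > l gives
  n points for each of the m(m - 1) ordered pairs.\<close>
lemma card_distance_collisions_le:
  assumes no_hp: "no_hyperplane_contains_more n N y" and pos: "\<forall>k<m. \<rho> k > 0"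
    and distinct: "\<forall>i<m. \<forall>l<m. i \<noteq> l \<longrightarrow> {x. x \<bullet> \<theta> i = \<rho> i} \<noteq> {x. x \<bullet> \<theta> l = \<rho> l}"
  shows "card {j. j < N \<and> \<not> inj_on (\<lambda>k. \<bar>y j \<bullet> \<theta> k - \<rho> k\<bar>) {..<m}} \<le> n * m * (m - 1)"
proof -
  define S where "S i l = (if i < l then {j. j < N \<and> y j \<bullet> (\<theta> i - \<theta> l) = \<rho> i - \<rho> l}
                                else {j. j < N \<and> y j \<bullet> (\<theta> i + \<theta> l) = \<rho> i + \<rho> l})" for i l
  have card_S: "card (S i l) \<le> n" if "i < m" "l < m" "i \<noteq> l" for i l
  proof (cases "i < l")
    case True
    have "\<theta> i - \<theta> l \<noteq> 0 \<or> \<rho> i - \<rho> l \<noteq> 0" using distinct that by force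
    then show ?thesis using True by (simp add: S_def card_points_on_hyperplane_le[OF no_hp])
  next
    case False
    have "\<rho> i + \<rho> l \<noteq> 0" using pos that by (metis add_pos_pos less_irrefl)
    then show ?thesis using False by (simp add: S_def card_points_on_hyperplane_le[OF no_hp])
  qed
  have "{j. j < N \<and> \<not> inj_on (\<lambda>k. \<bar>y j \<bullet> \<theta> k - \<rho> k\<bar>) {..<m}} \<subseteq> (\<Union>i<m. \<Union>l\<in>{..<m} - {i}. S i l)"
  proof clarify
    fix j assume "j < N" "\<not> inj_on (\<lambda>k. \<bar>y j \<bullet> \<theta> k - \<rho> k\<bar>) {..<m}"
    then obtain i l where "i < m" "l < m" "i \<noteq> l" and "\<bar>y j \<bullet> \<theta> i - \<rho> i\<bar> = \<bar>y j \<bullet> \<theta> l - \<rho> l\<bar>"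
      by (auto simp: inj_on_def)
    then have "j \<in> S i l \<or> j \<in> S l i"
      using \<open>j < N\<close> unfolding S_def abs_inner_diff_eq_iff
      by (auto simp: inner_diff_right inner_add_right algebra_simps)
    then show "j \<in> (\<Union>i<m. \<Union>l\<in>{..<m} - {i}. S i l)"
      using \<open>i < m\<close> \<open>l < m\<close> \<open>i \<noteq> l\<close> by blast
  qed
  then have "card {j. j < N \<and> \<not> inj_on (\<lambda>k. \<bar>y j \<bullet> \<theta> k - \<rho> k\<bar>) {..<m}}
      \<le> card (\<Union>i<m. \<Union>l\<in>{..<m} - {i}. S i l)"
    by (rule card_mono[rotated]) (simp add: S_def)
  also have "\<dots> \<le> (\<Sum>i<m. \<Sum>l\<in>{..<m} - {i}. card (S i l))"
    by (intro card_UN_le[THEN order_trans] sum_mono card_UN_le) simp_all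
  also have "\<dots> \<le> (\<Sum>i<m. \<Sum>l\<in>{..<m} - {i}. n)"
    using card_S by (intro sum_mono) auto
  also have "\<dots> = n * m * (m - 1)" by simp
  finally show ?thesis .
qed

lemma card_points_with_distinct_distances:
  assumes "no_hyperplane_contains_more n N y" and "\<forall>k<m. \<rho> k > 0"
    and "\<forall>i<m. \<forall>l<m. i \<noteq> l \<longrightarrow> {x. x \<bullet> \<theta> i = \<rho> i} \<noteq> {x. x \<bullet> \<theta> l = \<rho> l}"
  shows "N \<le> card {j. j < N \<and> inj_on (\<lambda>k. \<bar>y j \<bullet> \<theta> k - \<rho> k\<bar>) {..<m}} + n * m * (m - 1)"
proof -
  let ?good = "{j. j < N \<and> inj_on (\<lambda>k. \<bar>y j \<bullet> \<theta> k - \<rho> k\<bar>) {..<m}}"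
  let ?bad = "{j. j < N \<and> \<not> inj_on (\<lambda>k. \<bar>y j \<bullet> \<theta> k - \<rho> k\<bar>) {..<m}}"
  have "{..<N} = ?good \<union> ?bad" by auto
  then have "N = card (?good \<union> ?bad)" by (metis card_lessThan)
  also have "\<dots> \<le> card ?good + card ?bad" by (rule card_Un_le)
  finally show ?thesis using card_distance_collisions_le[OF assms] by linarith
qed

lemma admissible_paramsD:
  assumes "admissible_params m a \<theta> \<rho>"
  shows "\<forall>k<m. norm (\<theta> k) = 1" and "\<forall>k<m. \<rho> k > 0" and "\<And>k. k < m \<Longrightarrow> a k \<noteq> 0"
    and "inj_on a {..<m}"
    and "\<forall>i<m. \<forall>l<m. i \<noteq> l \<longrightarrow> {x. x \<bullet> \<theta> i = \<rho> i} \<noteq> {x. x \<bullet> \<theta> l = \<rho> l}"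
  using assms by (auto simp: admissible_params_def inj_on_def)

theorem theorem3p2:
  fixes m :: nat
    and a a' \<rho> \<rho>' :: "nat \<Rightarrow> real"
    and \<theta> \<theta>' :: "nat \<Rightarrow> 'a::euclidean_space"
    and y :: "nat \<Rightarrow> 'a"
  assumes "m > 0"
    and "admissible_params m a \<theta> \<rho>"
    and "admissible_params m a' \<theta>' \<rho>'"
    and "no_hyperplane_contains_more DIM('a) (DIM('a) * m * (m - 1) + 2 * DIM('a) + 1) y"
    and "\<forall>j < DIM('a) * m * (m - 1) + 2 * DIM('a) + 1. \<forall>\<Lambda>. test_fn \<Lambda> \<longrightarrow>
           smt_dist (y j) (delta_sum m a \<theta> \<rho>) \<Lambda> = smt_dist (y j) (delta_sum m a' \<theta>' \<rho>') \<Lambda>"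
  shows "\<exists>\<sigma>. bij_betw \<sigma> {..<m} {..<m} \<and>
           (\<forall>k<m. a' k = a (\<sigma> k) \<and> \<theta>' k = \<theta> (\<sigma> k) \<and> \<rho>' k = \<rho> (\<sigma> k))"
proof -
  define N where "N = DIM('a) * m * (m - 1) + 2 * DIM('a) + 1"
  define G where "G = {j. j < N \<and> inj_on (\<lambda>k. \<bar>y j \<bullet> \<theta> k - \<rho> k\<bar>) {..<m}}"
  note adm = admissible_paramsD[OF assms(2)] and adm' = admissible_paramsD[OF assms(3)]
  have no_hp: "no_hyperplane_contains_more DIM('a) N y" using assms(4) by (simp add: N_def)
  have G: "G \<subseteq> {..<N}" "card G > 2 * DIM('a)"
    using card_points_with_distinct_distances[OF no_hp adm(2,5)] by (auto simp: G_def N_def)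
  have at_G: "inj_on (\<lambda>k. \<bar>y j \<bullet> \<theta> k - \<rho> k\<bar>) {..<m}"
      "\<forall>\<Lambda>. test_fn \<Lambda> \<longrightarrow> smt_dist (y j) (delta_sum m a \<theta> \<rho>) \<Lambda> = smt_dist (y j) (delta_sum m a' \<theta>' \<rho>') \<Lambda>"
    if "j \<in> G" for j
    using that assms(5) by (simp_all add: G_def N_def)
  obtain j where "j \<in> G" using G(2) by fastforce
  then obtain \<sigma> where \<sigma>: "bij_betw \<sigma> {..<m} {..<m}" "\<forall>k<m. a' k = a (\<sigma> k)"
    using smt_delta_sum_determines_distances[OF adm(1) adm'(1) at_G(1) adm(3) at_G(2)] by blast
  have "\<theta> (\<sigma> k) = \<theta>' k \<and> \<rho> (\<sigma> k) = \<rho>' k" if "k < m" for k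
  proof (rule hyperplane_eq_if_distances_agree[OF no_hp _ _ G])
    show "\<rho> (\<sigma> k) > 0" "\<rho>' k > 0" using adm(2) adm'(2) bij_betwE[OF \<sigma>(1)] that by auto
    show "\<bar>y j \<bullet> \<theta> (\<sigma> k) - \<rho> (\<sigma> k)\<bar> = \<bar>y j \<bullet> \<theta>' k - \<rho>' k\<bar>" if "j \<in> G" for j
      using smt_delta_sum_distances_eq_along_weights[OF adm(1) adm'(1) at_G[OF that] adm(3,4) \<sigma>] \<open>k < m\<close> by simp
  qed
  then show ?thesis using \<sigma> by auto
qed

end
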